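(* Let $m\ge1$, let $\mathcal{I}\subseteq\mathcal{M}_m$ be a decreasing monomial set, and let $f=x_{i_1}x_{i_2}$ ($i_1<i_2$) and $g=x_{j_1}x_{j_2}$ ($j_1<j_2$) be monomials with $\gcd(f,g)=1$ and $i_2>j_2$. Then \[ |{\rm LTA}(m,2)\cdot f+{\rm LTA}(m,2)\cdot g|=\frac{|{\rm LTA}(m,2)\cdot f|\cdot |{\rm LTA}(m,2)\cdot g|}{2^{\alpha_{f,g}}}. \]
   Context: $\mathbf{R}_m=\mathbb{F}_2[x_0,\dots,x_{m-1}]/(x_0^2-x_0,\dots,x_{m-1}^2-x_{m-1})$; $\mathcal{M}_m$ is the set of monomials $x_0^{i_0}\cdots x_{m-1}^{i_{m-1}}$, $i_j\in\{0,1\}$; $\gcd$ of monomials is the monomial on the common variables. Order: $f\preceq_w g$ iff every variable of $f$ divides $g$; for equal-degree $f=x_{i_1}\cdots x_{i_s}$, $g=x_{j_1}\cdots x_{j_s}$ (increasing indices), $f\preceq_{sh}g$ iff $i_\ell\le j_\ell$ for all $\ell$; $f\preceq g$ iff $f\preceq_{sh}g^*\preceq_w g$ for some $g^*$; $\mathcal{I}$ is decreasing if $f\in\mathcal{I}$, $g\preceq f$ imply $g\in\mathcal{I}$. ${\rm LTA}(m,2)$ is the set of pairs $(\mathbf{B},\varepsilon)$ with $\mathbf{B}=(b_{i,j})\in\mathbb{F}_2^{m\times m}$ lower triangular with ones on the diagonal and $\varepsilon\in\mathbb{F}_2^m$; for a monomial $u$, $(\mathbf{B},\varepsilon)\cdot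 u\in\mathbf{R}_m$ is obtained by replacing each variable $x_i$ of $u$ by $x_i+\sum_{j<i}b_{i,j}x_j+\varepsilon_i$, and ${\rm LTA}(m,2)\cdot u$ is the set of all such polynomials. For sets $\mathcal{S},\mathcal{T}\subseteq\mathbf{R}_m$, $\mathcal{S}+\mathcal{T}=\{s+t:s\in\mathcal{S},t\in\mathcal{T}\}$. The degree of collision is $\alpha_{f,g}=0$ if $i_2>i_1>j_2>j_1$, $1$ if $i_2>j_2>i_1>j_1$, and $2$ if $i_2>j_2>j_1>i_1$. *)

theory Defs
  imports Complex_Main
begin

text \<open>Elements of R_m = F_2[x_0..x_{m-1}]/(x_i^2 - x_i) are represented by their
  unique multilinear normal form: a finite set of monomials, where a monomial
  x_{i_1}...x_{i_s} is represented by the set of its variable indices {i_1,...,i_s}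
  (a subset of {0..<m}).  Addition in characteristic 2 is symmetric difference.\<close>

type_synonym monomial = "nat set"
type_synonym rpoly = "nat set set"

definition monomials :: "nat \<Rightarrow> monomial set" where
  "monomials m = Pow {..<m}"

definition padd :: "rpoly \<Rightarrow> rpoly \<Rightarrow> rpoly" where
  "padd p q = (p - q) \<union> (q - p)"

text \<open>Product: multiply monomials (x_i^2 = x_i, so product of monomials is the union
  of index sets) and add up coefficients mod 2.\<close>
definition pmul :: "rpoly \<Rightarrow> rpoly \<Rightarrow> rpoly" where
  "pmul p q = {w. odd (card {(a, b). a \<in> p \<and> b \<in> q \<and> a \<union> b = w})}"

definition pone :: rpoly where "pone = {{}}"

definition mono_gcd :: "monomial \<Rightarrow> monomial \<Rightarrow> monomial" where
  "mono_gcd f g = f \<inter> g"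

definition weak_le :: "monomial \<Rightarrow> monomial \<Rightarrow> bool" where
  "weak_le f g \<longleftrightarrow> f \<subseteq> g"

definition sh_le :: "monomial \<Rightarrow> monomial \<Rightarrow> bool" where
  "sh_le f g \<longleftrightarrow> finite f \<and> finite g \<and> card f = card g \<and>
     (\<forall>l < card f. sorted_list_of_set f ! l \<le> sorted_list_of_set g ! l)"

definition mono_le :: "monomial \<Rightarrow> monomial \<Rightarrow> bool" where
  "mono_le f g \<longleftrightarrow> (\<exists>g'. sh_le f g' \<and> weak_le g' g)"

definition decreasing :: "nat \<Rightarrow> monomial set \<Rightarrow> bool" where
  "decreasing m I \<longleftrightarrow> I \<subseteq> monomials m \<and>
     (\<forall>f \<in> I. \<forall>g \<in> monomials m. mono_le g f \<longrightarrow> g \<in> I)"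

definition LTA :: "nat \<Rightarrow> ((nat \<Rightarrow> nat \<Rightarrow> bool) \<times> (nat \<Rightarrow> bool)) set" where
  "LTA m = {(B, eps). (\<forall>i j. B i j \<longrightarrow> i < m \<and> j \<le> i) \<and> (\<forall>i < m. B i i) \<and>
                     (\<forall>i. eps i \<longrightarrow> i < m)}"

definition lin_image :: "(nat \<Rightarrow> nat \<Rightarrow> bool) \<Rightarrow> (nat \<Rightarrow> bool) \<Rightarrow> nat \<Rightarrow> rpoly" where
  "lin_image B eps i = {{i}} \<union> {{j} | j. j < i \<and> B i j} \<union> (if eps i then {{}} else {})"

definition lta_act :: "(nat \<Rightarrow> nat \<Rightarrow> bool) \<Rightarrow> (nat \<Rightarrow> bool) \<Rightarrow> monomial \<Rightarrow> rpoly" where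
  "lta_act B eps u = foldr pmul (map (lin_image B eps) (sorted_list_of_set u)) pone"

definition orbit :: "nat \<Rightarrow> monomial \<Rightarrow> rpoly set" where
  "orbit m u = (\<lambda>(B, eps). lta_act B eps u) ` LTA m"

definition sumset :: "rpoly set \<Rightarrow> rpoly set \<Rightarrow> rpoly set" where
  "sumset S T = {padd s t | s t. s \<in> S \<and> t \<in> T}"

definition alpha :: "nat \<Rightarrow> nat \<Rightarrow> nat \<Rightarrow> nat \<Rightarrow> nat" where
  "alpha i1 i2 j1 j2 =
     (if i2 > i1 \<and> i1 > j2 \<and> j2 > j1 then 0
      else if i2 > j2 \<and> j2 > i1 \<and> i1 > j1 then 1
      else if i2 > j2 \<and> j2 > j1 \<and> j1 > i1 then 2
      else undefined)"

end

theory Submission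
  imports Defs
begin

(* The orbit of x_a x_b (a < b) consists of the products l_a l_b of affine forms
   l_k = x_k + (linear form in the x_j, j < k) + c.  Since l^2 = l in R_m, we have
   l_a l_b = l_a (l_b + l_a + 1), so x_a may be assumed absent from l_b; then l_a and l_b
   are read off from the coefficients of x_i x_b, x_b and of x_i x_a, x_a respectively,
   which counts the orbit.
   For a sum l_1 l_2 + l_3 l_4 of an element of the orbit of f and one of the orbit of g,
   the identity l_1 l_2 + l_3 l_4 = l_1 (l_2 + l_4) + (l_3 + l_1) l_4 (and its mirror image)
   removes x_{i1} from l_3 and from l_4, after which x_{j1} is removed from l_4 as before.
   In this normal form l_3 l_4 involves neither x_{i1} nor x_{i2}, so l_1 and l_2 are read
   off from the sum, and then l_3 and l_4 from the remainder l_3 l_4.  Each removal of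
   x_{i1} from a factor whose leading variable exceeds i1 halves the number of choices of
   that factor; there are alpha of them. *)

lemma mem_padd_iff [simp]: "w \<in> padd p q \<longleftrightarrow> (w \<in> p) \<noteq> (w \<in> q)"
  by (auto simp: padd_def)

lemma padd_empty_right [simp]: "padd p {} = p"
  by (auto simp: padd_def)

lemma padd_self [simp]: "padd p p = {}"
  by (auto simp: padd_def)

lemma padd_self_left [simp]: "padd p (padd p q) = q"
  by (auto simp: padd_def)

lemma padd_assoc: "padd (padd p q) r = padd p (padd q r)"
  by (auto simp: padd_def)

lemma padd_commute: "padd p q = padd q p"
  by (auto simp: padd_def)

lemma padd_left_commute: "padd p (padd q r) = padd q (padd p r)"
  by (auto simp: padd_def)

lemmas padd_ac = padd_assoc padd_commute padd_left_commute

lemma padd_left_cancel: "padd p q = padd p r \<Longrightarrow> q = r"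
  by (metis padd_self_left)

lemma mem_pmulE:
  assumes "w \<in> pmul p q"
  obtains u v where "u \<in> p" "v \<in> q" "w = u \<union> v"
proof -
  have "odd (card {(u, v). u \<in> p \<and> v \<in> q \<and> u \<union> v = w})"
    using assms by (simp add: pmul_def)
  then have "{(u, v). u \<in> p \<and> v \<in> q \<and> u \<union> v = w} \<noteq> {}"
    by (intro notI) simp
  then show ?thesis
    using that by blast
qed

lemma pmul_pone [simp]: "pmul p pone = p"
proof (rule set_eqI)
  fix w
  have "{(u, v). u \<in> p \<and> v \<in> pone \<and> u \<union> v = w} = (if w \<in> p then {(w, {})} else {})"
    by (auto simp: pone_def)
  then show "w \<in> pmul p pone \<longleftrightarrow> w \<in> p"
    by (simp add: pmul_def)
qed

section \<open>Products of affine forms\<close>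

(* (S, e) stands for the affine form sum_{j in S} x_j + e. *)
type_synonym affine = "nat set \<times> bool"

definition affine_poly :: "affine \<Rightarrow> rpoly" where
  "affine_poly x = (\<lambda>j. {j}) ` fst x \<union> (if snd x then {{}} else {})"

definition affine_add :: "affine \<Rightarrow> affine \<Rightarrow> affine" where
  "affine_add x y = ((fst x - fst y) \<union> (fst y - fst x), snd x \<noteq> snd y)"

definition affine_one :: affine where
  "affine_one = ({}, True)"

definition affine_mul :: "affine \<Rightarrow> affine \<Rightarrow> rpoly" where
  "affine_mul x y = pmul (affine_poly x) (affine_poly y)"

lemma mem_affine_poly_iff: "u \<in> affine_poly (S, e) \<longleftrightarrow> (u = {} \<and> e) \<or> (\<exists>j \<in> S. u = {j})"
  by (auto simp: affine_poly_def)

lemma affine_mul_empty_iff [simp]: "{} \<in> affine_mul (S, e) (T, f) \<longleftrightarrow> e \<and> f"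
proof -
  have "{(u, v). u \<in> affine_poly (S, e) \<and> v \<in> affine_poly (T, f) \<and> u \<union> v = {}} =
      (if e \<and> f then {({}, {})} else {})"
    by (auto simp: mem_affine_poly_iff)
  then show ?thesis
    unfolding affine_mul_def pmul_def mem_Collect_eq by simp
qed

lemma affine_mul_singleton_iff [simp]:
  "{i} \<in> affine_mul (S, e) (T, f) \<longleftrightarrow> (i \<in> S \<and> i \<in> T) \<noteq> ((i \<in> S \<and> f) \<noteq> (e \<and> i \<in> T))"
proof -
  have pairs: "{(u, v). u \<in> affine_poly (S, e) \<and> v \<in> affine_poly (T, f) \<and> u \<union> v = {i}} =
      (if i \<in> S \<and> i \<in> T then {({i}, {i})} else {}) \<union> (if i \<in> S \<and> f then {({i}, {})} else {}) \<union>
      (if e \<and> i \<in> T then {({}, {i})} else {})"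
    by (auto simp: mem_affine_poly_iff)
  show ?thesis
    unfolding affine_mul_def pmul_def mem_Collect_eq pairs
    by (cases "i \<in> S"; cases "i \<in> T"; cases e; cases f) simp_all
qed

lemma affine_mul_doubleton_iff [simp]:
  assumes "i \<noteq> j"
  shows "{i, j} \<in> affine_mul (S, e) (T, f) \<longleftrightarrow> (i \<in> S \<and> j \<in> T) \<noteq> (j \<in> S \<and> i \<in> T)"
proof -
  have pairs: "{(u, v). u \<in> affine_poly (S, e) \<and> v \<in> affine_poly (T, f) \<and> u \<union> v = {i, j}} =
      (if i \<in> S \<and> j \<in> T then {({i}, {j})} else {}) \<union> (if j \<in> S \<and> i \<in> T then {({j}, {i})} else {})"
    unfolding mem_affine_poly_iff using assms by (auto simp: doubleton_eq_iff)
  show ?thesis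
    unfolding affine_mul_def pmul_def mem_Collect_eq pairs
    using assms by (cases "i \<in> S"; cases "i \<in> T"; cases "j \<in> S"; cases "j \<in> T") simp_all
qed

lemma affine_poly_subset:
  assumes "u \<in> affine_poly (S, e)"
  shows "u \<subseteq> S" "finite u" "card u \<le> 1"
  using assms by (auto simp: mem_affine_poly_iff)

lemma affine_mul_subset:
  assumes "w \<in> affine_mul (S, e) (T, f)"
  shows "w \<subseteq> S \<union> T" "finite w" "card w \<le> 2"
proof -
  obtain u v where u: "u \<in> affine_poly (S, e)" and v: "v \<in> affine_poly (T, f)" and "w = u \<union> v"
    using assms unfolding affine_mul_def by (rule mem_pmulE)
  then show "w \<subseteq> S \<union> T" "finite w" "card w \<le> 2"
    using affine_poly_subset[OF u] affine_poly_subset[OF v] card_Un_le[of u v] by auto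
qed

definition quadratic :: "rpoly \<Rightarrow> bool" where
  "quadratic p \<longleftrightarrow> (\<forall>w \<in> p. finite w \<and> card w \<le> 2)"

lemma quadratic_affine_mul [simp]: "quadratic (affine_mul x y)"
  by (cases x; cases y) (auto simp: quadratic_def dest: affine_mul_subset)

lemma quadratic_padd [simp]: "quadratic p \<Longrightarrow> quadratic q \<Longrightarrow> quadratic (padd p q)"
  by (auto simp: quadratic_def)

lemma card_le_2_cases:
  assumes "finite w" "card w \<le> 2"
  obtains "w = {}" | i where "w = {i}" | i j where "i \<noteq> j" "w = {i, j}"
proof -
  have "card w = 0 \<or> card w = 1 \<or> card w = 2"
    using assms(2) by linarith
  then show ?thesis
    using assms(1) that by (auto simp: card_1_singleton_iff card_2_iff)
qed

lemma quadratic_eqI: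
  assumes "quadratic p" "quadratic q"
    and "{} \<in> p \<longleftrightarrow> {} \<in> q"
    and "\<And>i. {i} \<in> p \<longleftrightarrow> {i} \<in> q"
    and "\<And>i j. i \<noteq> j \<Longrightarrow> {i, j} \<in> p \<longleftrightarrow> {i, j} \<in> q"
  shows "p = q"
proof (rule set_eqI)
  fix w
  show "w \<in> p \<longleftrightarrow> w \<in> q"
  proof (cases "w \<in> p \<or> w \<in> q")
    case True
    then have "finite w" "card w \<le> 2"
      using assms(1,2) by (auto simp: quadratic_def)
    then show ?thesis
      by (rule card_le_2_cases) (use assms(3-5) in auto)
  qed auto
qed

lemma affine_mul_commute: "affine_mul x y = affine_mul y x"
  by (cases x; cases y) (rule quadratic_eqI; auto)

lemma affine_mul_add_right: "affine_mul x (affine_add y z) = padd (affine_mul x y) (affine_mul x z)"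
  by (cases x; cases y; cases z) (rule quadratic_eqI; auto simp: affine_add_def)

lemma affine_mul_add_left: "affine_mul (affine_add x y) z = padd (affine_mul x z) (affine_mul y z)"
  by (simp only: affine_mul_commute[of _ z] affine_mul_add_right)

lemma affine_mul_self: "affine_mul x x = affine_mul x affine_one"
  by (cases x) (rule quadratic_eqI; auto simp: affine_one_def)

lemma affine_mul_add_self_one: "affine_mul x (affine_add (affine_add y x) affine_one) = affine_mul x y"
  by (simp add: affine_mul_add_right affine_mul_self padd_assoc)

lemma padd_affine_mul_shift:
  "padd (affine_mul x (affine_add y w)) (affine_mul (affine_add z x) w) =
   padd (affine_mul x y) (affine_mul z w)"
  by (simp add: affine_mul_add_left affine_mul_add_right padd_ac)

section \<open>Affine forms with a given leading variable\<close>

definition affine_forms :: "nat \<Rightarrow> nat set \<Rightarrow> affine set" where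
  "affine_forms k E = {(S, e). S \<subseteq> {..k} \<and> k \<in> S \<and> S \<inter> E = {}}"

lemma affine_forms_antimono: "E \<subseteq> E' \<Longrightarrow> affine_forms k E' \<subseteq> affine_forms k E"
  by (auto simp: affine_forms_def)

lemma affine_add_mem_affine_forms:
  assumes "x \<in> affine_forms k E" "y \<in> affine_forms j E" "j < k"
  shows "affine_add x y \<in> affine_forms k E"
    and "j \<in> fst x \<Longrightarrow> affine_add x y \<in> affine_forms k (insert j E)"
  using assms by (cases x; cases y; auto simp: affine_forms_def affine_add_def)+

lemma affine_add_one_mem_affine_forms [simp]:
  "affine_add x affine_one \<in> affine_forms k E \<longleftrightarrow> x \<in> affine_forms k E"
  by (cases x) (simp add: affine_forms_def affine_add_def affine_one_def)

lemma mem_affine_mul_affine_forms: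
  assumes "x \<in> affine_forms c E" "y \<in> affine_forms d E" "w \<in> affine_mul x y"
  shows "w \<subseteq> {..max c d} - E"
proof -
  obtain S e T f where xy: "x = (S, e)" "y = (T, f)"
    by fastforce
  then have "w \<subseteq> S \<union> T"
    using assms(3) affine_mul_subset(1) by blast
  moreover have "S \<subseteq> {..c} - E" "T \<subseteq> {..d} - E"
    using assms(1,2) by (auto simp: xy affine_forms_def)
  ultimately show ?thesis
    by (fastforce simp: le_max_iff_disj)
qed

lemma card_affine_forms:
  assumes "k \<notin> E"
  shows "card (affine_forms k E) = 2 ^ Suc (k - card (E \<inter> {..<k}))"
proof -
  have "affine_forms k E = insert k ` Pow ({..<k} - E) \<times> UNIV"
  proof (rule set_eqI)
    fix x :: affine
    show "x \<in> affine_forms k E \<longleftrightarrow> x \<in> insert k ` Pow ({..<k} - E) \<times> UNIV"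
    proof (cases x)
      case (Pair S e)
      have "S \<subseteq> {..k} \<and> k \<in> S \<and> S \<inter> E = {} \<longleftrightarrow> S \<in> insert k ` Pow ({..<k} - E)"
      proof
        assume "S \<subseteq> {..k} \<and> k \<in> S \<and> S \<inter> E = {}"
        then have "S = insert k (S - {k})" "S - {k} \<in> Pow ({..<k} - E)"
          by (auto simp: subset_iff less_le)
        then show "S \<in> insert k ` Pow ({..<k} - E)"
          by blast
      qed (use assms in auto)
      then show ?thesis
        by (simp add: Pair affine_forms_def)
    qed
  qed
  moreover have "inj_on (insert k) (Pow ({..<k} - E))"
    by (auto simp: inj_on_def insert_ident)
  moreover have "card ({..<k} - E) = k - card (E \<inter> {..<k})"
    by (simp add: card_Diff_subset_Int Int_commute)
  ultimately show ?thesis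
    by (simp add: card_cartesian_product card_image card_Pow)
qed

lemma card_affine_forms_insert:
  assumes "k \<notin> E" "j \<notin> E" "j \<noteq> k"
  shows "card (affine_forms k (insert j E)) * 2 ^ of_bool (j < k) = card (affine_forms k E)"
proof -
  have "card (insert j E \<inter> {..<k}) = card (E \<inter> {..<k}) + of_bool (j < k)"
    using assms(2) by (cases "j < k") (simp_all add: Int_insert_left)
  moreover have "card (insert j E \<inter> {..<k}) \<le> k"
    by (metis card_lessThan card_mono finite_lessThan inf_le2)
  ultimately show ?thesis
    using assms by (simp add: card_affine_forms power_add[symmetric] Suc_diff_le)
qed

lemma affine_mul_reduce:
  assumes "x \<in> affine_forms j E" "y \<in> affine_forms k E" "j < k"
  obtains y' where "y' \<in> affine_forms k (insert j E)" "affine_mul x y' = affine_mul x y"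
proof (cases "j \<in> fst y")
  case True
  then have "affine_add (affine_add y x) affine_one \<in> affine_forms k (insert j E)"
    using affine_add_mem_affine_forms(2)[OF assms(2,1,3)] by simp
  then show ?thesis
    using that affine_mul_add_self_one by blast
next
  case False
  then have "y \<in> affine_forms k (insert j E)"
    using assms(2) by (cases y) (auto simp: affine_forms_def)
  then show ?thesis
    using that by blast
qed

lemma padd_affine_mul_reduce:
  assumes "x \<in> affine_forms a {}" "y \<in> affine_forms b {}" "z \<in> affine_forms c {}"
    and "w \<in> affine_forms d {}" "a \<noteq> c" "d < b"
  obtains y' z' where "y' \<in> affine_forms b {}" "z' \<in> affine_forms c {a}"
    and "padd (affine_mul x y') (affine_mul z' w) = padd (affine_mul x y) (affine_mul z w)"
proof (cases "a \<in> fst z")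
  case True
  then have "a < c"
    using assms(3,5) by (cases z) (auto simp: affine_forms_def)
  then have "affine_add y w \<in> affine_forms b {}" "affine_add z x \<in> affine_forms c {a}"
    using affine_add_mem_affine_forms[OF assms(2,4,6)] affine_add_mem_affine_forms(2)[OF assms(3,1)] True
    by simp_all
  then show ?thesis
    using that padd_affine_mul_shift by blast
next
  case False
  then have "z \<in> affine_forms c {a}"
    using assms(3) by (cases z) (auto simp: affine_forms_def)
  then show ?thesis
    using that assms(2) by blast
qed

definition leading_factors :: "nat \<Rightarrow> nat \<Rightarrow> rpoly \<Rightarrow> affine \<times> affine" where
  "leading_factors a b p =
     (({i. i \<noteq> b \<and> {i, b} \<in> p}, {b} \<in> p), ({i. i \<noteq> a \<and> {i, a} \<in> p}, {a} \<in> p))"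

lemma leading_factors_padd_affine_mul:
  assumes "x \<in> affine_forms a {}" "y \<in> affine_forms b {a}" "a < b"
    and "\<forall>w \<in> q. a \<notin> w \<and> b \<notin> w"
  shows "leading_factors a b (padd (affine_mul x y) q) = (x, y)"
proof -
  obtain A e B f where xy: "x = (A, e)" "y = (B, f)"
    by fastforce
  define p where "p = padd (affine_mul x y) q"
  have A: "a \<in> A" "b \<notin> A" and B: "b \<in> B" "a \<notin> B"
    using assms(1-3) by (auto simp: xy affine_forms_def)
  have q: "{i, b} \<notin> q" "{b} \<notin> q" "{i, a} \<notin> q" "{a} \<notin> q" for i
    using assms(4) by auto
  have "i \<noteq> b \<and> {i, b} \<in> p \<longleftrightarrow> i \<in> A" for i
    using A B q by (cases "i = b") (simp_all add: p_def xy)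
  moreover have "i \<noteq> a \<and> {i, a} \<in> p \<longleftrightarrow> i \<in> B" for i
    using A B q by (cases "i = a") (simp_all add: p_def xy)
  moreover have "{b} \<in> p \<longleftrightarrow> e" "{a} \<in> p \<longleftrightarrow> f"
    using A B q by (simp_all add: p_def xy)
  ultimately have "leading_factors a b p = (x, y)"
    by (simp add: leading_factors_def xy)
  then show ?thesis
    by (simp only: p_def)
qed

lemma inj_on_affine_mul:
  assumes "a < b"
  shows "inj_on (case_prod affine_mul) (affine_forms a {} \<times> affine_forms b {a})"
  by (rule inj_on_inverseI[where g = "leading_factors a b"])
    (use assms leading_factors_padd_affine_mul[where q = "{}"] in auto)

section \<open>Orbits of quadratic monomials\<close>

definition lta_form :: "(nat \<Rightarrow> nat \<Rightarrow> bool) \<Rightarrow> (nat \<Rightarrow> bool) \<Rightarrow> nat \<Rightarrow> affine" where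
  "lta_form B eps i = (insert i {j. j < i \<and> B i j}, eps i)"

lemma lin_image_eq_affine_poly: "lin_image B eps i = affine_poly (lta_form B eps i)"
  by (auto simp: lin_image_def affine_poly_def lta_form_def)

lemma lta_act_doubleton:
  "a < b \<Longrightarrow> lta_act B eps {a, b} = affine_mul (lta_form B eps a) (lta_form B eps b)"
  by (simp add: lta_act_def lin_image_eq_affine_poly affine_mul_def)

lemma orbit_doubleton:
  assumes "a < b" "b < m"
  shows "orbit m {a, b} = case_prod affine_mul ` (affine_forms a {} \<times> affine_forms b {})"
proof
  show "orbit m {a, b} \<subseteq> case_prod affine_mul ` (affine_forms a {} \<times> affine_forms b {})"
  proof
    fix p
    assume "p \<in> orbit m {a, b}"
    then obtain B eps where "p = lta_act B eps {a, b}"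
      by (auto simp: orbit_def)
    moreover have "lta_form B eps a \<in> affine_forms a {}" "lta_form B eps b \<in> affine_forms b {}"
      by (auto simp: lta_form_def affine_forms_def)
    ultimately show "p \<in> case_prod affine_mul ` (affine_forms a {} \<times> affine_forms b {})"
      using lta_act_doubleton[OF assms(1)] by force
  qed
next
  show "case_prod affine_mul ` (affine_forms a {} \<times> affine_forms b {}) \<subseteq> orbit m {a, b}"
  proof
    fix p
    assume "p \<in> case_prod affine_mul ` (affine_forms a {} \<times> affine_forms b {})"
    then obtain S e T f where ST: "(S, e) \<in> affine_forms a {}" "(T, f) \<in> affine_forms b {}"
      and p: "p = affine_mul (S, e) (T, f)"
      by auto
    define B where "B i j \<longleftrightarrow> i < m \<and> j \<le> i \<and> (j = i \<or> (i = a \<and> j \<in> S) \<or> (i = b \<and> j \<in> T))"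
      for i j
    define eps where "eps i \<longleftrightarrow> (i = a \<and> e) \<or> (i = b \<and> f)" for i
    have "(B, eps) \<in> LTA m"
      using assms by (auto simp: LTA_def B_def eps_def)
    moreover have "lta_form B eps a = (S, e)" "lta_form B eps b = (T, f)"
      using ST assms by (auto simp: lta_form_def B_def eps_def affine_forms_def)
    ultimately show "p \<in> orbit m {a, b}"
      using lta_act_doubleton[OF assms(1), of B eps] p unfolding orbit_def by force
  qed
qed

lemma affine_mul_image_reduce:
  assumes "a < b"
  shows "case_prod affine_mul ` (affine_forms a {} \<times> affine_forms b {}) =
         case_prod affine_mul ` (affine_forms a {} \<times> affine_forms b {a})"
proof
  show "case_prod affine_mul ` (affine_forms a {} \<times> affine_forms b {}) \<subseteq>
        case_prod affine_mul ` (affine_forms a {} \<times> affine_forms b {a})"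
  proof (rule image_subsetI)
    fix k
    assume "k \<in> affine_forms a {} \<times> affine_forms b {}"
    then obtain x y where k: "k = (x, y)" and "x \<in> affine_forms a {}" "y \<in> affine_forms b {}"
      by blast
    then obtain y' where "y' \<in> affine_forms b {a}" "affine_mul x y' = affine_mul x y"
      using affine_mul_reduce assms by blast
    then show "case_prod affine_mul k \<in> case_prod affine_mul ` (affine_forms a {} \<times> affine_forms b {a})"
      using \<open>x \<in> affine_forms a {}\<close> by (intro rev_image_eqI[of "(x, y')"]) (simp_all add: k)
  qed
qed (intro image_mono Sigma_mono affine_forms_antimono; simp)

lemma card_orbit_doubleton:
  assumes "a < b" "b < m"
  shows "card (orbit m {a, b}) = card (affine_forms a {}) * card (affine_forms b {a})"
  using assms by (simp add: orbit_doubleton affine_mul_image_reduce card_image inj_on_affine_mul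
      card_cartesian_product)

section \<open>Sums of two orbits\<close>

lemma sumset_image: "sumset (f ` X) (g ` Y) = (\<lambda>(p, q). padd (f p) (g q)) ` (X \<times> Y)"
  by (auto simp: sumset_def)

definition product_sum :: "(affine \<times> affine) \<times> (affine \<times> affine) \<Rightarrow> rpoly" where
  "product_sum = (\<lambda>(p, q). padd (case_prod affine_mul p) (case_prod affine_mul q))"

definition reduced_quadruples ::
    "nat \<Rightarrow> nat \<Rightarrow> nat \<Rightarrow> nat \<Rightarrow> ((affine \<times> affine) \<times> (affine \<times> affine)) set" where
  "reduced_quadruples a b c d =
     (affine_forms a {} \<times> affine_forms b {a}) \<times> (affine_forms c {a} \<times> affine_forms d {a, c})"

lemma product_sum_image_reduce:
  assumes "a < b" "c < d" "d < b" "a \<noteq> c" "a \<noteq> d"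
  shows "product_sum ` ((affine_forms a {} \<times> affine_forms b {}) \<times> (affine_forms c {} \<times> affine_forms d {})) =
         product_sum ` reduced_quadruples a b c d"
proof
  show "product_sum ` ((affine_forms a {} \<times> affine_forms b {}) \<times> (affine_forms c {} \<times> affine_forms d {})) \<subseteq>
        product_sum ` reduced_quadruples a b c d"
  proof (rule image_subsetI)
    fix k
    assume "k \<in> (affine_forms a {} \<times> affine_forms b {}) \<times> (affine_forms c {} \<times> affine_forms d {})"
    then obtain x1 x2 x3 x4 where k: "k = ((x1, x2), (x3, x4))"
      and x1: "x1 \<in> affine_forms a {}" and x2: "x2 \<in> affine_forms b {}"
      and x3: "x3 \<in> affine_forms c {}" and x4: "x4 \<in> affine_forms d {}"
      by auto
    obtain y2 y3 where y2: "y2 \<in> affine_forms b {}" and y3: "y3 \<in> affine_forms c {a}"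
      and eq1: "padd (affine_mul x1 y2) (affine_mul y3 x4) = padd (affine_mul x1 x2) (affine_mul x3 x4)"
      using padd_affine_mul_reduce[OF x1 x2 x3 x4 assms(4,3)] .
    have "y3 \<in> affine_forms c {}"
      using y3 affine_forms_antimono by blast
    moreover have "c < b"
      using assms(2,3) by simp
    ultimately obtain z2 y4 where z2: "z2 \<in> affine_forms b {}" and y4: "y4 \<in> affine_forms d {a}"
      and eq2: "padd (affine_mul x1 z2) (affine_mul y4 y3) = padd (affine_mul x1 y2) (affine_mul x4 y3)"
      using padd_affine_mul_reduce[OF x1 y2 x4 _ assms(5)] by blast
    obtain z4 where z4: "z4 \<in> affine_forms d (insert c {a})" and eq3: "affine_mul y3 z4 = affine_mul y3 y4"
      using affine_mul_reduce[OF y3 y4 assms(2)] .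
    obtain w2 where w2: "w2 \<in> affine_forms b (insert a {})" and eq4: "affine_mul x1 w2 = affine_mul x1 z2"
      using affine_mul_reduce[OF x1 z2 assms(1)] .
    have "((x1, w2), (y3, z4)) \<in> reduced_quadruples a b c d"
      using x1 w2 y3 z4 by (simp add: reduced_quadruples_def insert_commute)
    moreover have "product_sum k = product_sum ((x1, w2), (y3, z4))"
    proof -
      have "product_sum k = padd (affine_mul x1 y2) (affine_mul y3 x4)"
        by (simp add: product_sum_def k eq1)
      also have "\<dots> = padd (affine_mul x1 z2) (affine_mul y4 y3)"
        by (simp only: eq2 affine_mul_commute[of y3 x4])
      also have "\<dots> = product_sum ((x1, w2), (y3, z4))"
        by (simp only: product_sum_def case_prod_conv eq3 eq4 affine_mul_commute[of y3 y4])
      finally show ?thesis .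
    qed
    ultimately show "product_sum k \<in> product_sum ` reduced_quadruples a b c d"
      by (rule rev_image_eqI)
  qed
qed (unfold reduced_quadruples_def; intro image_mono Sigma_mono affine_forms_antimono; simp)

lemma inj_on_product_sum:
  assumes "a < b" "c < d" "d < b"
  shows "inj_on product_sum (reduced_quadruples a b c d)"
proof (rule inj_onI)
  fix k k'
  assume k: "k \<in> reduced_quadruples a b c d" and k': "k' \<in> reduced_quadruples a b c d"
    and eq: "product_sum k = product_sum k'"
  obtain x1 x2 x3 x4 where kx: "k = ((x1, x2), (x3, x4))"
    by (metis prod.collapse)
  obtain y1 y2 y3 y4 where ky: "k' = ((y1, y2), (y3, y4))"
    by (metis prod.collapse)
  have x: "x1 \<in> affine_forms a {}" "x2 \<in> affine_forms b {a}" "x3 \<in> affine_forms c {a}" "x4 \<in> affine_forms d {a, c}"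
    using k by (auto simp: kx reduced_quadruples_def)
  have y: "y1 \<in> affine_forms a {}" "y2 \<in> affine_forms b {a}" "y3 \<in> affine_forms c {a}" "y4 \<in> affine_forms d {a, c}"
    using k' by (auto simp: ky reduced_quadruples_def)
  have avoid: "\<forall>w \<in> affine_mul z3 z4. a \<notin> w \<and> b \<notin> w"
    if "z3 \<in> affine_forms c {a}" "z4 \<in> affine_forms d {a, c}" for z3 z4
  proof
    fix w
    assume w: "w \<in> affine_mul z3 z4"
    have "z4 \<in> affine_forms d {a}"
      using that(2) affine_forms_antimono[of "{a}" "{a, c}" d] by auto
    then have "w \<subseteq> {..max c d} - {a}"
      using mem_affine_mul_affine_forms[OF that(1) _ w] by simp
    moreover have "max c d < b"
      using assms(2,3) by simp
    ultimately show "a \<notin> w \<and> b \<notin> w"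
      by auto
  qed
  have pk: "product_sum k = padd (affine_mul x1 x2) (affine_mul x3 x4)"
    by (simp add: kx product_sum_def)
  have pk': "product_sum k' = padd (affine_mul y1 y2) (affine_mul y3 y4)"
    by (simp add: ky product_sum_def)
  have "(x1, x2) = leading_factors a b (product_sum k)"
    using leading_factors_padd_affine_mul[OF x(1,2) assms(1) avoid[OF x(3,4)]] by (simp only: pk)
  also have "\<dots> = (y1, y2)"
    using leading_factors_padd_affine_mul[OF y(1,2) assms(1) avoid[OF y(3,4)]] by (simp only: eq pk')
  finally have "x1 = y1" "x2 = y2"
    by simp_all
  then have "padd (affine_mul x1 x2) (affine_mul x3 x4) = padd (affine_mul x1 x2) (affine_mul y3 y4)"
    using eq unfolding pk pk' by simp
  then have "case_prod affine_mul (x3, x4) = case_prod affine_mul (y3, y4)"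
    by (simp add: padd_left_cancel)
  moreover have "(x3, x4) \<in> affine_forms c {} \<times> affine_forms d {c}"
    and "(y3, y4) \<in> affine_forms c {} \<times> affine_forms d {c}"
    using x(3,4) y(3,4) affine_forms_antimono[of "{c}" "{a, c}" d] affine_forms_antimono[of "{}" "{a}" c]
    by auto
  ultimately have "(x3, x4) = (y3, y4)"
    by (rule inj_onD[OF inj_on_affine_mul[OF assms(2)]])
  then show "k = k'"
    using \<open>x1 = y1\<close> \<open>x2 = y2\<close> by (simp add: kx ky)
qed

lemma card_sumset_orbit_doubleton:
  assumes "a < b" "b < m" "c < d" "d < b" "a \<noteq> c" "a \<noteq> d"
  shows "card (sumset (orbit m {a, b}) (orbit m {c, d})) =
         card (affine_forms a {}) * card (affine_forms b {a}) *
         (card (affine_forms c {a}) * card (affine_forms d {a, c}))"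
proof -
  have "sumset (orbit m {a, b}) (orbit m {c, d}) = product_sum ` reduced_quadruples a b c d"
    using assms product_sum_image_reduce[OF assms(1,3,4,5,6)]
    by (simp add: orbit_doubleton sumset_image product_sum_def)
  then have "card (sumset (orbit m {a, b}) (orbit m {c, d})) = card (reduced_quadruples a b c d)"
    using card_image[OF inj_on_product_sum[OF assms(1,3,4)]] by simp
  then show ?thesis
    by (simp add: reduced_quadruples_def card_cartesian_product)
qed

lemma alpha_eq_of_bool:
  assumes "i1 < i2" "j1 < j2" "j2 < i2" "i1 \<noteq> j1" "i1 \<noteq> j2"
  shows "alpha i1 i2 j1 j2 = of_bool (i1 < j1) + of_bool (i1 < j2)"
  using assms by (auto simp: alpha_def)

theorem proposition1:
  fixes m :: nat and I :: "monomial set" and i1 i2 j1 j2 :: nat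
  assumes "m \<ge> 1"
    and "decreasing m I"
    and "i1 < i2" and "i2 < m" and "j1 < j2" and "j2 < m"
    and "mono_gcd {i1, i2} {j1, j2} = {}"
    and "i2 > j2"
  shows "real (card (sumset (orbit m {i1, i2}) (orbit m {j1, j2}))) =
         real (card (orbit m {i1, i2})) * real (card (orbit m {j1, j2})) / 2 ^ alpha i1 i2 j1 j2"
proof -
  have "i1 \<noteq> j1" "i1 \<noteq> j2"
    using assms(7) by (auto simp: mono_gcd_def)
  have "card (sumset (orbit m {i1, i2}) (orbit m {j1, j2})) * 2 ^ alpha i1 i2 j1 j2 =
        card (affine_forms i1 {}) * card (affine_forms i2 {i1}) *
        (card (affine_forms j1 {i1}) * 2 ^ of_bool (i1 < j1) *
         (card (affine_forms j2 {i1, j1}) * 2 ^ of_bool (i1 < j2)))"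
    using assms \<open>i1 \<noteq> j1\<close> \<open>i1 \<noteq> j2\<close>
    by (simp add: card_sumset_orbit_doubleton alpha_eq_of_bool power_add)
  also have "\<dots> = card (orbit m {i1, i2}) * card (orbit m {j1, j2})"
    using assms \<open>i1 \<noteq> j1\<close> \<open>i1 \<noteq> j2\<close>
    by (simp add: card_orbit_doubleton card_affine_forms_insert[of j1 "{}" i1, simplified]
        card_affine_forms_insert[of j2 "{j1}" i1, simplified])
  finally have "real (card (sumset (orbit m {i1, i2}) (orbit m {j1, j2}))) * 2 ^ alpha i1 i2 j1 j2 =
      real (card (orbit m {i1, i2})) * real (card (orbit m {j1, j2}))"
    by (metis of_nat_mult of_nat_numeral of_nat_power)
  then show ?thesis
    by (simp add: field_simps)
qed

end
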